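(* In the setting below, $\sigma_0^{-1}(0)=(\sigma|_{\hat M_0})^{-1}(0)$, and the map $\sigma_0^{-1}(0)/H_0\to\sigma^{-1}(0)/H$ induced by the inclusion $\sigma_0^{-1}(0)\subset\sigma^{-1}(0)$ is injective.
   Context: $M=\mathrm{End}(\mathbb{C}^k)\oplus\mathrm{End}(\mathbb{C}^k)\oplus\mathbb{C}^k\oplus(\mathbb{C}^k)^*$ (flat hyperkähler), $H=U(k)\times U(k)$ acting by $(g_0,g_1)\cdot(A,B,p,q)=(g_0Ag_1^{-1},g_1Bg_0^{-1},g_0p,qg_0^{-1})$ with hyperkähler moment map $\hat\mu$, $G=U(k)$, $\rho=\mathrm{id}$. $N_G$ is Kronheimer's hyperkähler manifold: the moduli $\mathcal{N}_G/\mathcal{G}_0$ of solutions $T=(T_0,\dots,T_3)\in C^1([0,1],\mathbf{g})\otimes\mathbb{H}$ of Nahm's equations $\frac{dT_i}{ds}+[T_0,T_i]+[T_j,T_k]=0$ modulo gauge transformations equal to $1$ at both ends, with $G\times G$-action via endpoint values of gauge transformations and hyperkähler moment map $\nu([T])=((T_1(0),T_2(0),T_3(0)),-(T_1(1),T_2(1),T_3(1)))$; $\sigma(x,p)=\hat\mu(x)+\rho^*\nu(p)$ on $\hat M=M\times N_{U(k)}$. Let $T^k\subset U(k)$ be the diagonal torus, $\mathbf{t}^k$ its Lie algebra; $N_{T^k}$ is identified with $T^k\times\mathbb{R}^{3k}$ (flat), and the inclusion $T^k\subset U(k)$ induces a hyperkähler embedding $N_{T^k}\subset N_{U(k)}$.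 Let $M_0=\{(A,B,0,0):A,B\text{ diagonal}\}\cong\mathbb{C}^k\oplus\mathbb{C}^k$ and $\hat M_0=M_0\times N_{T^k}\subset\hat M$. Let $H_0\subset H$ be the closed subgroup generated by $\{(g\chi,\chi):g\in T^k,\ \chi\in\mathcal{S}_k\}$ ($\mathcal{S}_k$ realized as permutation matrices), so $H_0\cong\mathcal{S}_k\ltimes T^k$ preserves $\hat M_0$, with Lie algebra $\mathbf{h}_0=\mathbf{t}^k\oplus\{0\}$; $\iota_0^*:\mathbf{h}^*\to\mathbf{h}_0^*$ is the restriction and $\sigma_0=\iota_0^*\circ\sigma|_{\hat M_0}$. *)

theory Defs
  imports "HOL-Analysis.Analysis"
begin

type_synonym 'k cmat = "complex^'k^'k"

(* points of M = End(C^k) + End(C^k) + C^k + (C^k)^*  : (A, B, p, q);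
   p is a column vector, q a row vector *)
type_synonym 'k Mpt = "'k cmat \<times> 'k cmat \<times> (complex^'k) \<times> (complex^'k)"

(* Nahm data T = (T_0,..,T_3): index i in {0,1,2,3}, parameter s in [0,1] *)
type_synonym 'k nahm = "nat \<Rightarrow> real \<Rightarrow> 'k cmat"

definition adj :: "'k::finite cmat \<Rightarrow> 'k cmat" where
  "adj A = (\<chi> i j. cnj (A $ j $ i))"

definition unitary :: "'k::finite cmat \<Rightarrow> bool" where
  "unitary U \<longleftrightarrow> adj U ** U = mat 1 \<and> U ** adj U = mat 1"

definition skew :: "'k::finite cmat \<Rightarrow> bool" where
  "skew X \<longleftrightarrow> adj X = - X"

definition diagonal :: "'k::finite cmat \<Rightarrow> bool" where
  "diagonal X \<longleftrightarrow> (\<forall>i j. i \<noteq> j \<longrightarrow> X $ i $ j = 0)"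

definition permmat :: "'k::finite cmat \<Rightarrow> bool" where
  "permmat P \<longleftrightarrow> (\<exists>\<pi>. \<pi> permutes (UNIV :: 'k set) \<and> P = (\<chi> i j. if i = \<pi> j then 1 else 0))"

definition comm :: "'k::finite cmat \<Rightarrow> 'k cmat \<Rightarrow> 'k cmat" where
  "comm X Y = X ** Y - Y ** X"

definition C1_on01 :: "(real \<Rightarrow> 'a::real_normed_vector) \<Rightarrow> bool" where
  "C1_on01 f \<longleftrightarrow> (\<exists>f'. (\<forall>s\<in>{0..1}. (f has_vector_derivative f' s) (at s within {0..1}))
                      \<and> continuous_on {0..1} f')"

definition C2_on01 :: "(real \<Rightarrow> 'a::real_normed_vector) \<Rightarrow> bool" where
  "C2_on01 f \<longleftrightarrow> (\<exists>f'. (\<forall>s\<in>{0..1}. (f has_vector_derivative f' s) (at s within {0..1}))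
                      \<and> C1_on01 f')"

definition nahm_sol :: "'k::finite nahm \<Rightarrow> bool" where
  "nahm_sol T \<longleftrightarrow>
     (\<forall>i\<le>3. C1_on01 (T i) \<and> (\<forall>s\<in>{0..1}. skew (T i s))) \<and>
     (\<forall>(i,j,l)\<in>{(1,2,3),(2,3,1),(3,1,2)}. \<forall>s\<in>{0..1}.
        (T i has_vector_derivative (- comm (T 0 s) (T i s) - comm (T j s) (T l s)))
          (at s within {0..1}))"

definition gauge :: "(real \<Rightarrow> 'k::finite cmat) \<Rightarrow> bool" where
  "gauge g \<longleftrightarrow> C2_on01 g \<and> (\<forall>s\<in>{0..1}. unitary (g s))"

definition gact :: "(real \<Rightarrow> 'k::finite cmat) \<Rightarrow> 'k nahm \<Rightarrow> 'k nahm" where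
  "gact g T i s =
     (if i = 0 then g s ** T 0 s ** adj (g s) - vector_derivative g (at s within {0..1}) ** adj (g s)
      else g s ** T i s ** adj (g s))"

definition nahm_eq :: "'k::finite nahm \<Rightarrow> 'k nahm \<Rightarrow> bool" where
  "nahm_eq S T \<longleftrightarrow> (\<forall>i\<le>3. \<forall>s\<in>{0..1}. S i s = T i s)"

definition Hgrp :: "('k::finite cmat \<times> 'k cmat) set" where
  "Hgrp = {(g0, g1). unitary g0 \<and> unitary g1}"

fun Hact :: "'k::finite cmat \<times> 'k cmat \<Rightarrow> 'k Mpt \<Rightarrow> 'k Mpt" where
  "Hact (g0, g1) (A, B, p, q) =
      ((g0 ** A) ** adj g1, (g1 ** B) ** adj g0, g0 *v p, vector_matrix_mult q (adj g0))"

definition closed_subgroup_H :: "('k::finite cmat \<times> 'k cmat) set \<Rightarrow> bool" where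
  "closed_subgroup_H S \<longleftrightarrow> S \<subseteq> Hgrp \<and> (mat 1, mat 1) \<in> S \<and>
     (\<forall>a\<in>S. \<forall>b\<in>S. (fst a ** fst b, snd a ** snd b) \<in> S) \<and>
     (\<forall>a\<in>S. (adj (fst a), adj (snd a)) \<in> S) \<and> closed S"

definition H0gens :: "('k::finite cmat \<times> 'k cmat) set" where
  "H0gens = {(g ** c, c) | g c. diagonal g \<and> unitary g \<and> permmat c}"

definition H0grp :: "('k::finite cmat \<times> 'k cmat) set" where
  "H0grp = \<Inter> {S. closed_subgroup_H S \<and> H0gens \<subseteq> S}"

(* points of hat M = M x N_{U(k)}: pairs (x, T) with T a Nahm solution, [T] its G_0-class.
   (x,T) is related to (y,S) by h in a subgroup K iff there is a gauge transformation g
   with (g 0, g 1) = h in K,  y = h.x  and  S = g.T.  For K = {1} this is G_0-equivalence. *)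
definition rel_by :: "('k::finite cmat \<times> 'k cmat) set \<Rightarrow> 'k Mpt \<times> 'k nahm \<Rightarrow> 'k Mpt \<times> 'k nahm \<Rightarrow> bool" where
  "rel_by K z w \<longleftrightarrow> (case z of (x, T) \<Rightarrow> case w of (y, S) \<Rightarrow>
     (\<exists>g. gauge g \<and> (g 0, g 1) \<in> K \<and> y = Hact (g 0, g 1) x \<and> nahm_eq S (gact g T)))"

(* hat M_0 = M_0 x N_{T^k}, N_{T^k} embedded in N_{U(k)} as classes of t^k-valued solutions *)
definition in_hatM0 :: "'k::finite Mpt \<times> 'k nahm \<Rightarrow> bool" where
  "in_hatM0 z \<longleftrightarrow> (case z of (x, T) \<Rightarrow>
     nahm_sol T \<and>
     (\<exists>A B. x = (A, B, 0, 0) \<and> diagonal A \<and> diagonal B) \<and>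
     (\<exists>S. nahm_sol S \<and> (\<forall>i\<le>3. \<forall>s\<in>{0..1}. diagonal (S i s)) \<and>
          rel_by {(mat 1, mat 1)} (x, T) (x, S)))"

(* hyperkaehler moment map of H on M, components a = 1,2,3 (I,J,K), factor j = 0,1,
   values in u(k) (h^* identified with h via the trace form) *)
definition outer :: "complex^'k \<Rightarrow> complex^'k \<Rightarrow> 'k::finite cmat" where
  "outer u v = (\<chi> i j. u $ i * v $ j)"

definition csmul :: "complex \<Rightarrow> 'k::finite cmat \<Rightarrow> 'k cmat" where
  "csmul c M = (\<chi> a b. c * M $ a $ b)"

definition muR :: "'k::finite Mpt \<Rightarrow> nat \<Rightarrow> 'k cmat" where
  "muR x j = (case x of (A, B, p, q) \<Rightarrow>
     if j = 0 then csmul (\<i> / 2) (A ** adj A - adj B ** B + outer p (\<chi> i. cnj (p $ i))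
                                   - outer (\<chi> i. cnj (q $ i)) q)
     else csmul (\<i> / 2) (B ** adj B - adj A ** A))"

definition muC :: "'k::finite Mpt \<Rightarrow> nat \<Rightarrow> 'k cmat" where
  "muC x j = (case x of (A, B, p, q) \<Rightarrow>
     if j = 0 then A ** B + outer p q else - (B ** A))"

(* hyperkaehler moment map: mu_1 = muR, mu_2 + i mu_3 = muC with mu_2, mu_3 in u(k) *)
definition mu_hat :: "'k::finite Mpt \<Rightarrow> nat \<Rightarrow> nat \<Rightarrow> 'k cmat" where
  "mu_hat x a j =
     (if a = 1 then muR x j
      else if a = 2 then csmul (1/2) (muC x j - adj (muC x j))
      else csmul (1 / (2 * \<i>)) (muC x j + adj (muC x j)))"

definition nu :: "'k::finite nahm \<Rightarrow> nat \<Rightarrow> nat \<Rightarrow> 'k cmat" where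
  "nu T a j = (if j = 0 then T a 0 else - T a 1)"

(* sigma(x,[T]) = mu_hat(x) + nu([T])   (rho = id) *)
definition sigma :: "'k::finite Mpt \<times> 'k nahm \<Rightarrow> nat \<Rightarrow> nat \<Rightarrow> 'k cmat" where
  "sigma z a j = (case z of (x, T) \<Rightarrow> mu_hat x a j + nu T a j)"

definition sigma_zero :: "'k::finite Mpt \<times> 'k nahm \<Rightarrow> bool" where
  "sigma_zero z \<longleftrightarrow> (\<forall>a\<in>{1,2,3}. \<forall>j\<in>{0,1}. sigma z a j = 0)"

(* sigma_0 = iota_0^* o sigma: pairing of sigma with h_0 = t^k + 0 via the trace form *)
definition sigma0_zero :: "'k::finite Mpt \<times> 'k nahm \<Rightarrow> bool" where
  "sigma0_zero z \<longleftrightarrow> (\<forall>a\<in>{1,2,3}. \<forall>X. diagonal X \<and> skew X \<longrightarrow>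
       Re (trace (sigma z a 0 ** X)) = 0)"

end

theory Submission
  imports Defs
begin

text \<open>
  On \<open>M\<^sub>0 \<times> N\<^sub>T\<close> every component of \<open>\<sigma>\<close> is a diagonal matrix with imaginary entries,
  i.e. it lies in \<open>t\<^sup>k\<close>, so it vanishes as soon as its pairing with \<open>t\<^sup>k\<close> does.

  For injectivity, first replace both Nahm data by gauge-equivalent diagonal ones. A gauge
  transformation \<open>G\<close> relating diagonal data \<open>T\<close> and \<open>S\<close> solves \<open>G' = G T\<^sub>0 - S\<^sub>0 G\<close>, so each entry
  \<open>G\<^sub>a\<^sub>b\<close> solves a scalar linear equation with imaginary coefficient and is a nonvanishing
  function times a constant. Choosing a permutation \<open>\<rho>\<close> with \<open>G(0)\<^sub>a\<^sub>\<rho>\<^sub>a \<noteq> 0\<close>, the monomial gauge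
  transformation built from the solutions of these equations along the entries \<open>(a, \<rho> a)\<close>
  relates the same two points and has endpoints in \<open>H\<^sub>0 = \<S>\<^sub>k \<ltimes> T\<^sup>k\<close>. This part does not
  need the moment map condition.
\<close>

section \<open>Matrix algebra\<close>

lemma matrix_mult_entry: "(A ** B) $ i $ j = (\<Sum>k\<in>UNIV. A $ i $ k * B $ k $ j)"
  by (simp add: matrix_matrix_mult_def)

lemma adj_entry [simp]: "adj A $ i $ j = cnj (A $ j $ i)"
  by (simp add: adj_def)

lemma adj_adj [simp]: "adj (adj A) = A"
  by (simp add: vec_eq_iff)

lemma adj_mult: "adj (A ** B) = adj B ** adj A"
  by (simp add: vec_eq_iff matrix_mult_entry mult.commute)

lemma adj_mat1 [simp]: "adj (mat 1 :: 'k::finite cmat) = mat 1"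
  by (simp add: vec_eq_iff mat_def)

lemma linear_adj: "linear (adj :: 'k::finite cmat \<Rightarrow> 'k cmat)"
  by (rule linearI) (simp_all add: vec_eq_iff)

lemma bounded_linear_adj: "bounded_linear (adj :: 'k::finite cmat \<Rightarrow> 'k cmat)"
  using linear_adj linear_conv_bounded_linear by blast

lemma matrix_add_rdistrib: "(B + C) ** A = B ** A + C ** A"
  by (vector matrix_matrix_mult_def sum.distrib[symmetric] field_simps)

lemma matrix_diff_ldistrib: "(A::'k::finite cmat) ** (B - C) = A ** B - A ** C"
  by (simp add: vec_eq_iff matrix_mult_entry sum_subtractf right_diff_distrib)

lemma matrix_diff_rdistrib: "((B::'k::finite cmat) - C) ** A = B ** A - C ** A"
  by (simp add: vec_eq_iff matrix_mult_entry sum_subtractf left_diff_distrib)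

lemma bounded_bilinear_matrix_mult:
  "bounded_bilinear ((**) :: 'k::finite cmat \<Rightarrow> 'k cmat \<Rightarrow> 'k cmat)"
proof -
  have "bilinear ((**) :: 'k::finite cmat \<Rightarrow> 'k cmat \<Rightarrow> 'k cmat)"
    unfolding bilinear_def
    by (auto intro!: linearI simp: matrix_add_ldistrib matrix_add_rdistrib scalar_matrix_assoc
        matrix_scalar_ac)
  then show ?thesis
    using bilinear_conv_bounded_bilinear by blast
qed

lemma unitary_mult: "unitary A \<Longrightarrow> unitary B \<Longrightarrow> unitary (A ** B)"
  unfolding unitary_def adj_mult by (metis matrix_mul_assoc matrix_mul_lid)

lemma unitary_adj: "unitary A \<Longrightarrow> unitary (adj A)"
  unfolding unitary_def by simp

lemma unitary_mult_adj_cancel: "unitary U \<Longrightarrow> X ** U ** adj U = (X::'k::finite cmat)"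
  unfolding unitary_def by (metis matrix_mul_assoc matrix_mul_rid)

lemma unitary_adj_mult_cancel: "unitary U \<Longrightarrow> X ** adj U ** U = (X::'k::finite cmat)"
  unfolding unitary_def by (metis matrix_mul_assoc matrix_mul_rid)

lemma unitary_conj_eq_imp_commute:
  assumes "unitary U" "U ** X ** adj U = Y"
  shows "U ** X = Y ** U"
  using assms unitary_adj_mult_cancel by metis

lemma unitary_conj_diff_eq_imp:
  assumes "unitary U" "U ** X ** adj U - V ** adj U = Y"
  shows "V = U ** X - Y ** U"
proof -
  have "(U ** X ** adj U - V ** adj U) ** U = U ** X - V"
    using assms(1) by (simp add: matrix_diff_rdistrib unitary_adj_mult_cancel)
  then show ?thesis
    using assms(2) by (simp add: algebra_simps)
qed

lemma det_unitary_nonzero: "unitary U \<Longrightarrow> det U \<noteq> 0"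
  unfolding unitary_def by (metis det_I det_mul mult_zero_left zero_neq_one)

text \<open>A nonzero term in the Leibniz expansion of the determinant.\<close>

lemma det_nonzero_ex_permutation:
  fixes A :: "'a::comm_ring_1^'n::finite^'n"
  assumes "det A \<noteq> 0"
  shows "\<exists>\<rho>. \<rho> permutes (UNIV::'n set) \<and> (\<forall>i. A $ i $ \<rho> i \<noteq> 0)"
proof (rule ccontr)
  assume "\<not> ?thesis"
  then have "of_int (sign p) * (\<Prod>i\<in>UNIV. A $ i $ p i) = 0" if "p permutes UNIV" for p
    using that by (metis UNIV_I finite prod_zero mult_zero_right)
  then have "det A = 0"
    unfolding det_def by (intro sum.neutral) blast
  with assms show False ..
qed

lemma diagonal_entry_eq_0: "diagonal D \<Longrightarrow> i \<noteq> j \<Longrightarrow> D $ i $ j = 0"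
  unfolding diagonal_def by blast

lemma diagonal_mult_left_entry: "diagonal D \<Longrightarrow> (D ** E) $ i $ j = D $ i $ i * E $ i $ j"
  unfolding diagonal_def matrix_mult_entry
  by (subst sum.remove[of _ i]) (auto intro!: sum.neutral)

lemma diagonal_mult_right_entry: "diagonal D \<Longrightarrow> (E ** D) $ i $ j = E $ i $ j * D $ j $ j"
  unfolding diagonal_def matrix_mult_entry
  by (subst sum.remove[of _ j]) (auto intro!: sum.neutral)

lemma diagonal_commute: "diagonal D \<Longrightarrow> diagonal E \<Longrightarrow> D ** E = E ** D"
  by (simp add: vec_eq_iff diagonal_mult_left_entry diagonal_mult_right_entry)
    (metis diagonal_entry_eq_0 mult.commute mult_zero_left mult_zero_right)

lemma diagonal_add: "diagonal A \<Longrightarrow> diagonal B \<Longrightarrow> diagonal (A + B)"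
  unfolding diagonal_def by simp

lemma diagonal_intertwine_entry:
  assumes "diagonal D" "diagonal D'" "D' ** V = U ** D"
  shows "D' $ a $ a * V $ a $ b = U $ a $ b * D $ b $ b"
  using arg_cong[OF assms(3), of "\<lambda>M. M $ a $ b"] assms(1,2)
  by (simp add: diagonal_mult_left_entry diagonal_mult_right_entry)

lemma skew_diagonal_entry_Re: "skew X \<Longrightarrow> Re (X $ m $ m) = 0"
  unfolding skew_def vec_eq_iff
  by (drule spec[of _ m], drule spec[of _ m]) (simp add: complex_eq_iff)

lemma diagonal_skewI:
  assumes "diagonal D" "\<And>m. Re (D $ m $ m) = 0"
  shows "skew D"
  unfolding skew_def vec_eq_iff
proof (intro allI)
  fix i j
  show "adj D $ i $ j = (- D) $ i $ j"
    using assms by (cases "i = j") (simp_all add: complex_eq_iff diagonal_entry_eq_0)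
qed

text \<open>For a diagonal matrix with imaginary entries, \<open>trace (D ** D) = - \<Sum> \<bar>D$m$m\<bar>\<^sup>2\<close>.\<close>

lemma diagonal_imaginary_trace_square_eq_0:
  fixes D :: "'k::finite cmat"
  assumes d: "diagonal D" and r: "\<And>m. Re (D $ m $ m) = 0" and t: "Re (trace (D ** D)) = 0"
  shows "D = 0"
proof -
  have "Re (trace (D ** D)) = - (\<Sum>m\<in>UNIV. (Im (D $ m $ m))\<^sup>2)"
    unfolding trace_def by (simp add: diagonal_mult_left_entry[OF d] r power2_eq_square sum_negf)
  then have "(\<Sum>m\<in>UNIV. (Im (D $ m $ m))\<^sup>2) = 0"
    using t by simp
  then have "Im (D $ m $ m) = 0" for m
    by (subst (asm) sum_nonneg_eq_0_iff) auto
  then have "D $ m $ m = 0" for m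
    using r by (simp add: complex_eq_iff)
  then show ?thesis
    using d unfolding vec_eq_iff by (metis diagonal_entry_eq_0 zero_index)
qed

definition diag_mat :: "('k \<Rightarrow> complex) \<Rightarrow> 'k::finite cmat" where
  "diag_mat d = (\<chi> a c. if a = c then d a else 0)"

definition monomial_mat :: "('k \<Rightarrow> 'k) \<Rightarrow> ('k \<Rightarrow> complex) \<Rightarrow> 'k::finite cmat" where
  "monomial_mat \<rho> m = (\<chi> a b. if b = \<rho> a then m a else 0)"

lemma monomial_mat_entry: "monomial_mat \<rho> m $ a $ b = (if b = \<rho> a then m a else 0)"
  by (simp add: monomial_mat_def)

lemma diagonal_diag_mat: "diagonal (diag_mat d)"
  by (simp add: diagonal_def diag_mat_def)

lemma diag_mat_eq_diagonal_iff:
  "diagonal D \<Longrightarrow> diag_mat d = D \<longleftrightarrow> (\<forall>a. d a = D $ a $ a)"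
  by (auto simp: diag_mat_def vec_eq_iff diagonal_entry_eq_0)

lemma monomial_mat_id: "monomial_mat id m = diag_mat m"
  by (auto simp: monomial_mat_def diag_mat_def vec_eq_iff)

lemma diagonal_mult_monomial_mat:
  "diagonal D \<Longrightarrow> D ** monomial_mat \<rho> m = monomial_mat \<rho> (\<lambda>a. D $ a $ a * m a)"
  by (simp add: vec_eq_iff diagonal_mult_left_entry monomial_mat_entry)

lemma monomial_mat_mult_adj:
  assumes "inj \<rho>"
  shows "monomial_mat \<rho> m ** adj (monomial_mat \<rho> n) = diag_mat (\<lambda>a. m a * cnj (n a))"
proof -
  have "(monomial_mat \<rho> m ** adj (monomial_mat \<rho> n)) $ a $ c =
      (\<Sum>b\<in>UNIV. if b = \<rho> a then m a * cnj (if \<rho> a = \<rho> c then n c else 0) else 0)" for a c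
    unfolding matrix_mult_entry by (intro sum.cong) (auto simp: monomial_mat_entry)
  then show ?thesis
    using assms by (auto simp: vec_eq_iff diag_mat_def dest: injD)
qed

lemma adj_monomial_mat_mult:
  assumes "\<rho> permutes UNIV"
  shows "adj (monomial_mat \<rho> m) ** monomial_mat \<rho> n =
    diag_mat (\<lambda>b. cnj (m (inv \<rho> b)) * n (inv \<rho> b))"
proof -
  have "(adj (monomial_mat \<rho> m) ** monomial_mat \<rho> n) $ b $ d =
      (\<Sum>a\<in>UNIV. if a = inv \<rho> b then cnj (m a) * (if d = \<rho> a then n a else 0) else 0)" for b d
    unfolding matrix_mult_entry
    by (intro sum.cong) (auto simp: monomial_mat_entry permutes_inverses[OF assms])
  then show ?thesis
    by (auto simp: vec_eq_iff diag_mat_def permutes_inverses[OF assms])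
qed

lemma monomial_mat_sandwich:
  assumes "inj \<rho>" "diagonal D"
  shows "monomial_mat \<rho> m ** D ** adj (monomial_mat \<rho> n) =
    diag_mat (\<lambda>a. m a * D $ \<rho> a $ \<rho> a * cnj (n a))"
proof -
  have "monomial_mat \<rho> m ** D = monomial_mat \<rho> (\<lambda>a. m a * D $ \<rho> a $ \<rho> a)"
    using assms(2) by (simp add: vec_eq_iff diagonal_mult_right_entry monomial_mat_entry)
  then show ?thesis
    by (simp add: monomial_mat_mult_adj[OF assms(1)])
qed

lemma unitary_monomial_mat:
  assumes "\<rho> permutes UNIV" "\<And>a. m a * cnj (m a) = 1"
  shows "unitary (monomial_mat \<rho> m)"
proof -
  have "cnj (m a) * m a = 1" for a
    using assms(2)[of a] by (simp add: mult.commute)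
  then show ?thesis
    unfolding unitary_def
    by (simp add: monomial_mat_mult_adj[OF permutes_inj[OF assms(1)]] adj_monomial_mat_mult[OF assms(1)]
        assms(2) diag_mat_def mat_def)
qed

lemma permmat_monomial_mat:
  assumes "\<rho> permutes UNIV"
  shows "permmat (monomial_mat \<rho> (\<lambda>a. 1))"
  unfolding permmat_def
proof (intro exI conjI)
  show "inv \<rho> permutes UNIV"
    using permutes_inv[OF assms] .
  show "monomial_mat \<rho> (\<lambda>a. 1) = (\<chi> i j. if i = inv \<rho> j then 1 else 0)"
    by (auto simp: vec_eq_iff monomial_mat_entry permutes_inverses[OF assms])
qed

section \<open>Calculus on the unit interval\<close>

lemma has_vector_derivative_vec_iff:
  fixes f :: "real \<Rightarrow> 'a::real_normed_vector ^ 'n::finite"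
  shows "(f has_vector_derivative D) (at x within S) \<longleftrightarrow>
         (\<forall>i. ((\<lambda>s. f s $ i) has_vector_derivative D $ i) (at x within S))"
proof
  assume "(f has_vector_derivative D) (at x within S)"
  then show "\<forall>i. ((\<lambda>s. f s $ i) has_vector_derivative D $ i) (at x within S)"
    using bounded_linear.has_vector_derivative[OF bounded_linear_vec_nth] by blast
next
  assume H: "\<forall>i. ((\<lambda>s. f s $ i) has_vector_derivative D $ i) (at x within S)"
  show "(f has_vector_derivative D) (at x within S)"
    unfolding has_vector_derivative_def has_derivative_within
  proof (intro conjI)
    show "bounded_linear (\<lambda>h. h *\<^sub>R D)"
      by (rule bounded_linear_scaleR_left)
    show "((\<lambda>y. (1 / norm (y - x)) *\<^sub>R (f y - (f x + (y - x) *\<^sub>R D))) \<longlongrightarrow> 0) (at x within S)"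
    proof (rule vec_tendstoI)
      fix i
      from H have "((\<lambda>y. (1 / norm (y - x)) *\<^sub>R (f y $ i - (f x $ i + (y - x) *\<^sub>R D $ i))) \<longlongrightarrow> 0)
          (at x within S)"
        unfolding has_vector_derivative_def has_derivative_within by blast
      then show "((\<lambda>y. ((1 / norm (y - x)) *\<^sub>R (f y - (f x + (y - x) *\<^sub>R D))) $ i) \<longlongrightarrow> 0 $ i)
          (at x within S)"
        by simp
    qed
  qed
qed

lemma has_vector_derivative_mat_iff:
  fixes f :: "real \<Rightarrow> 'a::real_normed_vector ^ 'n::finite ^ 'm::finite"
  shows "(f has_vector_derivative D) (at x within S) \<longleftrightarrow>
         (\<forall>i j. ((\<lambda>s. f s $ i $ j) has_vector_derivative D $ i $ j) (at x within S))"
  by (simp add: has_vector_derivative_vec_iff[of f] has_vector_derivative_vec_iff[of "\<lambda>s. f s $ _"])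

lemma vector_derivative_within_01:
  fixes f :: "real \<Rightarrow> 'a::euclidean_space"
  shows "s \<in> {0..1} \<Longrightarrow> (f has_vector_derivative D) (at s within {0..1}) \<Longrightarrow>
    vector_derivative f (at s within {0..1}) = D"
  using vector_derivative_within_closed_interval[of 0 1 s f D] by simp

lemma has_vector_derivative_matrix_mult:
  fixes f g :: "real \<Rightarrow> 'k::finite cmat"
  assumes "(f has_vector_derivative f') (at s within S)" "(g has_vector_derivative g') (at s within S)"
  shows "((\<lambda>s. f s ** g s) has_vector_derivative (f s ** g' + f' ** g s)) (at s within S)"
  using bounded_bilinear.has_vector_derivative[OF bounded_bilinear_matrix_mult assms] .

lemma has_vector_derivative_adj:
  fixes f :: "real \<Rightarrow> 'k::finite cmat"
  assumes "(f has_vector_derivative f') (at s within S)"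
  shows "((\<lambda>s. adj (f s)) has_vector_derivative adj f') (at s within S)"
  using bounded_linear.has_vector_derivative[OF bounded_linear_adj assms] .

lemma C1_on01_imp_continuous_on: "C1_on01 f \<Longrightarrow> continuous_on {0..1} f"
  unfolding C1_on01_def by (auto intro: continuous_on_vector_derivative)

lemma C1_on01_const: "C1_on01 (\<lambda>s. c)"
  unfolding C1_on01_def by (rule exI[of _ "\<lambda>s. 0"]) auto

lemma C1_on01_add: "C1_on01 f \<Longrightarrow> C1_on01 g \<Longrightarrow> C1_on01 (\<lambda>s. f s + g s)"
  unfolding C1_on01_def by (fast intro: has_vector_derivative_add continuous_on_add)

lemma C1_on01_diff: "C1_on01 f \<Longrightarrow> C1_on01 g \<Longrightarrow> C1_on01 (\<lambda>s. f s - g s)"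
  unfolding C1_on01_def by (fast intro: has_vector_derivative_diff continuous_on_diff)

lemma C1_on01_matrix_mult:
  fixes f g :: "real \<Rightarrow> 'k::finite cmat"
  assumes "C1_on01 f" "C1_on01 g"
  shows "C1_on01 (\<lambda>s. f s ** g s)"
proof -
  from assms obtain f' g' where
    f: "\<forall>s\<in>{0..1}. (f has_vector_derivative f' s) (at s within {0..1})" "continuous_on {0..1} f'" and
    g: "\<forall>s\<in>{0..1}. (g has_vector_derivative g' s) (at s within {0..1})" "continuous_on {0..1} g'"
    unfolding C1_on01_def by blast
  have "continuous_on {0..1} (\<lambda>s. f s ** g' s + f' s ** g s)"
    using assms C1_on01_imp_continuous_on
    by (intro continuous_on_add bounded_bilinear.continuous_on[OF bounded_bilinear_matrix_mult] f g)
      blast+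
  then show ?thesis
    unfolding C1_on01_def using f g has_vector_derivative_matrix_mult
    by (intro exI[of _ "\<lambda>s. f s ** g' s + f' s ** g s"]) blast
qed

lemma C1_on01_adj:
  fixes f :: "real \<Rightarrow> 'k::finite cmat"
  assumes "C1_on01 f"
  shows "C1_on01 (\<lambda>s. adj (f s))"
  using assms unfolding C1_on01_def
  by (fast intro: has_vector_derivative_adj bounded_linear.continuous_on[OF bounded_linear_adj])

lemma C1_on01_entry:
  fixes f :: "real \<Rightarrow> 'k::finite cmat"
  assumes "C1_on01 f"
  shows "C1_on01 (\<lambda>s. f s $ i $ j)"
proof -
  from assms obtain f' where
    f: "\<forall>s\<in>{0..1}. (f has_vector_derivative f' s) (at s within {0..1})" "continuous_on {0..1} f'"
    unfolding C1_on01_def by blast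
  have "continuous_on {0..1} (\<lambda>s. f' s $ i $ j)"
    by (intro bounded_linear.continuous_on[OF bounded_linear_vec_nth]
        bounded_linear.continuous_on[OF bounded_linear_vec_nth f(2)])
  then show ?thesis
    unfolding C1_on01_def using f(1)
    by (intro exI[of _ "\<lambda>s. f' s $ i $ j"]) (simp add: has_vector_derivative_mat_iff)
qed

lemma C1_on01_from_entries:
  fixes M :: "real \<Rightarrow> 'k::finite cmat"
  assumes "\<And>i j. C1_on01 (\<lambda>s. M s $ i $ j)"
  shows "C1_on01 M"
proof -
  from assms obtain d where
    d: "\<And>i j. (\<forall>s\<in>{0..1}. ((\<lambda>s. M s $ i $ j) has_vector_derivative d i j s) (at s within {0..1}))
      \<and> continuous_on {0..1} (d i j)"
    unfolding C1_on01_def by metis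
  have "\<forall>s\<in>{0..1}. (M has_vector_derivative (\<chi> i j. d i j s)) (at s within {0..1})"
    using d by (simp add: has_vector_derivative_mat_iff)
  moreover have "continuous_on {0..1} (\<lambda>s. \<chi> i j. d i j s)"
    using d by (intro continuous_on_vec_lambda) simp
  ultimately show ?thesis
    unfolding C1_on01_def by (intro exI[of _ "\<lambda>s. \<chi> i j. d i j s"]) blast
qed

lemma C2_on01_imp_C1_on01: "C2_on01 f \<Longrightarrow> C1_on01 f"
  unfolding C2_on01_def using C1_on01_imp_continuous_on C1_on01_def by blast

lemma C2_on01_const: "C2_on01 (\<lambda>s. c)"
  unfolding C2_on01_def by (rule exI[of _ "\<lambda>s. 0"]) (auto intro: C1_on01_const)

lemma C2_on01_matrix_mult:
  fixes f g :: "real \<Rightarrow> 'k::finite cmat"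
  assumes "C2_on01 f" "C2_on01 g"
  shows "C2_on01 (\<lambda>s. f s ** g s)"
proof -
  from assms obtain f' g' where
    f: "\<forall>s\<in>{0..1}. (f has_vector_derivative f' s) (at s within {0..1})" "C1_on01 f'" and
    g: "\<forall>s\<in>{0..1}. (g has_vector_derivative g' s) (at s within {0..1})" "C1_on01 g'"
    unfolding C2_on01_def by blast
  have "C1_on01 (\<lambda>s. f s ** g' s + f' s ** g s)"
    using assms C2_on01_imp_C1_on01 by (intro C1_on01_add C1_on01_matrix_mult f g) blast+
  then show ?thesis
    unfolding C2_on01_def using f g has_vector_derivative_matrix_mult
    by (intro exI[of _ "\<lambda>s. f s ** g' s + f' s ** g s"]) blast
qed

lemma C2_on01_adj:
  fixes f :: "real \<Rightarrow> 'k::finite cmat"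
  assumes "C2_on01 f"
  shows "C2_on01 (\<lambda>s. adj (f s))"
  using assms unfolding C2_on01_def by (fast intro: has_vector_derivative_adj C1_on01_adj)

lemma C2_on01_from_entries:
  fixes M :: "real \<Rightarrow> 'k::finite cmat"
  assumes "\<And>i j. C2_on01 (\<lambda>s. M s $ i $ j)"
  shows "C2_on01 M"
proof -
  from assms obtain d where
    d: "\<And>i j. (\<forall>s\<in>{0..1}. ((\<lambda>s. M s $ i $ j) has_vector_derivative d i j s) (at s within {0..1}))
      \<and> C1_on01 (d i j)"
    unfolding C2_on01_def by metis
  have "\<forall>s\<in>{0..1}. (M has_vector_derivative (\<chi> i j. d i j s)) (at s within {0..1})"
    using d by (simp add: has_vector_derivative_mat_iff)
  moreover have "C1_on01 (\<lambda>s. \<chi> i j. d i j s)"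
    using d by (intro C1_on01_from_entries) simp
  ultimately show ?thesis
    unfolding C2_on01_def by (intro exI[of _ "\<lambda>s. \<chi> i j. d i j s"]) blast
qed

text \<open>Since \<open>f + cnj f = 0\<close>, the derivative of \<open>\<phi> * cnj \<psi>\<close> vanishes.\<close>

lemma imaginary_ode_mult_cnj_const:
  fixes f \<phi> \<psi> :: "real \<Rightarrow> complex"
  assumes S: "convex S"
    and f: "\<forall>s\<in>S. Re (f s) = 0"
    and \<phi>: "\<forall>s\<in>S. (\<phi> has_vector_derivative f s * \<phi> s) (at s within S)"
    and \<psi>: "\<forall>s\<in>S. (\<psi> has_vector_derivative f s * \<psi> s) (at s within S)"
    and st: "s \<in> S" "t \<in> S"
  shows "\<phi> s * cnj (\<psi> s) = \<phi> t * cnj (\<psi> t)"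
proof -
  have "((\<lambda>s. \<phi> s * cnj (\<psi> s)) has_vector_derivative 0) (at s within S)" if s: "s \<in> S" for s
  proof -
    have "((\<lambda>s. \<phi> s * cnj (\<psi> s)) has_vector_derivative
        \<phi> s * cnj (f s * \<psi> s) + f s * \<phi> s * cnj (\<psi> s)) (at s within S)"
      using \<phi> \<psi> s by (intro has_vector_derivative_mult has_vector_derivative_cnj) auto
    moreover have "cnj (f s) = - f s"
      using f s by (simp add: complex_eq_iff)
    ultimately show ?thesis
      by (simp add: algebra_simps)
  qed
  then obtain c where "\<And>s. s \<in> S \<Longrightarrow> \<phi> s * cnj (\<psi> s) = c"
    using has_vector_derivative_zero_constant[OF S] by blast
  then show ?thesis
    using st by simp
qed

lemma imaginary_ode_unimodular_solution:
  fixes f :: "real \<Rightarrow> complex"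
  assumes cf: "continuous_on {0..1} f" and f: "\<forall>s\<in>{0..1}. Re (f s) = 0"
  shows "\<exists>E. E 1 = 1 \<and> (\<forall>s\<in>{0..1}.
     (E has_vector_derivative f s * E s) (at s within {0..1}) \<and> E s * cnj (E s) = 1)"
proof -
  define F where "F u = integral {0..u} f" for u
  define E where "E s = exp (F s - F 1)" for s
  have E': "(E has_vector_derivative f s * E s) (at s within {0..1})" if s: "s \<in> {0..1}" for s
  proof -
    have "((\<lambda>s. F s - F 1) has_vector_derivative f s) (at s within {0..1})"
      unfolding F_def
      using has_vector_derivative_diff[OF integral_has_vector_derivative[OF cf s]
          has_vector_derivative_const] by simp
    from field_vector_diff_chain_within[OF this has_field_derivative_at_within[OF DERIV_exp]]
    show ?thesis
      by (simp add: E_def[abs_def] o_def)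
  qed
  have "E 1 = 1"
    by (simp add: E_def)
  moreover have "E s * cnj (E s) = 1" if "s \<in> {0..1}" for s
    using imaginary_ode_mult_cnj_const[of "{0..1}" f E E s 1] f E' that \<open>E 1 = 1\<close> by simp
  ultimately show ?thesis
    using E' by blast
qed

lemma C2_on01_ode_solution:
  fixes f E :: "real \<Rightarrow> complex"
  assumes f: "C1_on01 f" and E: "\<forall>s\<in>{0..1}. (E has_vector_derivative f s * E s) (at s within {0..1})"
  shows "C2_on01 E"
proof -
  from f obtain f' where
    f': "\<forall>s\<in>{0..1}. (f has_vector_derivative f' s) (at s within {0..1})" "continuous_on {0..1} f'"
    unfolding C1_on01_def by blast
  have "continuous_on {0..1} E"
    using E by (intro continuous_on_vector_derivative) auto
  then have "continuous_on {0..1} (\<lambda>s. f s * (f s * E s) + f' s * E s)"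
    using C1_on01_imp_continuous_on[OF f] by (intro continuous_on_add continuous_on_mult f'(2))
  moreover have "\<forall>s\<in>{0..1}. ((\<lambda>s. f s * E s) has_vector_derivative
      f s * (f s * E s) + f' s * E s) (at s within {0..1})"
    using f'(1) E by (auto intro!: has_vector_derivative_mult)
  ultimately have "C1_on01 (\<lambda>s. f s * E s)"
    unfolding C1_on01_def by (intro exI[of _ "\<lambda>s. f s * (f s * E s) + f' s * E s"]) blast
  then show ?thesis
    unfolding C2_on01_def using E by (intro exI[of _ "\<lambda>s. f s * E s"]) blast
qed

section \<open>Gauge transformations\<close>

lemma gauge_unitary: "gauge g \<Longrightarrow> s \<in> {0..1} \<Longrightarrow> unitary (g s)"
  unfolding gauge_def by blast

lemma gauge_mult: "gauge f \<Longrightarrow> gauge g \<Longrightarrow> gauge (\<lambda>s. f s ** g s)"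
  unfolding gauge_def using C2_on01_matrix_mult unitary_mult by blast

lemma gauge_adj: "gauge f \<Longrightarrow> gauge (\<lambda>s. adj (f s))"
  unfolding gauge_def using C2_on01_adj unitary_adj by blast

lemma gauge_has_vector_derivative:
  assumes "gauge g" "s \<in> {0..1}"
  shows "(g has_vector_derivative vector_derivative g (at s within {0..1})) (at s within {0..1})"
proof -
  obtain g' where "(g has_vector_derivative g' s) (at s within {0..1})"
    using assms unfolding gauge_def C2_on01_def by blast
  with vector_derivative_within_01[OF assms(2) this] show ?thesis
    by simp
qed

lemma gact_cong: "X i s = Y i s \<Longrightarrow> gact g X i s = gact g Y i s"
  by (cases "i = 0") (simp_all add: gact_def)

lemma gact_mult:
  assumes p: "gauge p" and q: "gauge q" and s: "s \<in> {0..1}"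
  shows "gact (\<lambda>s. p s ** q s) X i s = gact p (gact q X) i s"
proof -
  define p' where "p' = vector_derivative p (at s within {0..1})"
  define q' where "q' = vector_derivative q (at s within {0..1})"
  have "vector_derivative (\<lambda>s. p s ** q s) (at s within {0..1}) = p s ** q' + p' ** q s"
    unfolding p'_def q'_def
    by (intro vector_derivative_within_01[OF s] has_vector_derivative_matrix_mult
        gauge_has_vector_derivative p q s)
  then show ?thesis
    using gauge_unitary[OF q s]
    by (simp add: gact_def p'_def q'_def adj_mult matrix_mul_assoc matrix_add_rdistrib
        matrix_diff_ldistrib matrix_diff_rdistrib unitary_mult_adj_cancel algebra_simps)
qed

lemma gact_adj_mult_self:
  assumes g: "gauge g" and s: "s \<in> {0..1}"
  shows "gact (\<lambda>s. adj (g s) ** g s) X i s = X i s"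
proof -
  have one: "adj (g t) ** g t = mat 1" if "t \<in> {0..1}" for t
    using gauge_unitary[OF g that] unfolding unitary_def by blast
  have "((\<lambda>s. adj (g s) ** g s) has_vector_derivative 0) (at s within {0..1})"
    by (rule has_vector_derivative_transform_within[of "\<lambda>s. mat 1" 0 s "{0..1}" 1])
      (use s one in auto)
  then show ?thesis
    using one[OF s] by (simp add: gact_def vector_derivative_within_01[OF s])
qed

lemma Hact_mult: "Hact (h0, h1) (Hact (g0, g1) x) = Hact (h0 ** g0, h1 ** g1) x"
  by (cases x) (simp add: adj_mult matrix_mul_assoc matrix_vector_mul_assoc vector_matrix_mul_assoc)

lemma Hact_mat1: "Hact (mat 1, mat 1) x = x"
  by (cases x) simp

lemma rel_by_trans:
  assumes "rel_by K z w" "rel_by L w v"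
    and "\<And>a b. a \<in> K \<Longrightarrow> b \<in> L \<Longrightarrow> (fst b ** fst a, snd b ** snd a) \<in> M"
  shows "rel_by M z v"
proof -
  obtain x T y S u V where zwv: "z = (x, T)" "w = (y, S)" "v = (u, V)"
    by (metis prod.exhaust)
  obtain g where g: "gauge g" "(g 0, g 1) \<in> K" "y = Hact (g 0, g 1) x" "nahm_eq S (gact g T)"
    using assms(1) by (auto simp: rel_by_def zwv)
  obtain h where h: "gauge h" "(h 0, h 1) \<in> L" "u = Hact (h 0, h 1) y" "nahm_eq V (gact h S)"
    using assms(2) by (auto simp: rel_by_def zwv)
  have "nahm_eq V (gact (\<lambda>s. h s ** g s) T)"
    using g(4) h(4) by (auto simp: nahm_eq_def gact_mult[OF h(1) g(1)] intro: gact_cong)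
  moreover have "u = Hact (h 0 ** g 0, h 1 ** g 1) x"
    using g(3) h(3) by (simp add: Hact_mult)
  ultimately show ?thesis
    using assms(3)[OF g(2) h(2)] gauge_mult[OF h(1) g(1)] by (auto simp: rel_by_def zwv)
qed

lemma rel_by_sym:
  assumes "rel_by K z w" and "\<And>a. a \<in> K \<Longrightarrow> (adj (fst a), adj (snd a)) \<in> L"
  shows "rel_by L w z"
proof -
  obtain x T y S where zw: "z = (x, T)" "w = (y, S)"
    by (metis prod.exhaust)
  obtain g where g: "gauge g" "(g 0, g 1) \<in> K" "y = Hact (g 0, g 1) x" "nahm_eq S (gact g T)"
    using assms(1) by (auto simp: rel_by_def zw)
  have "T i s = gact (\<lambda>s. adj (g s)) S i s" if "i \<le> 3" "s \<in> {0..1}" for i s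
  proof -
    have "gact (\<lambda>s. adj (g s)) S i s = gact (\<lambda>s. adj (g s)) (gact g T) i s"
      using g(4) that by (auto simp: nahm_eq_def intro: gact_cong)
    also have "\<dots> = gact (\<lambda>s. adj (g s) ** g s) T i s"
      using gact_mult[OF gauge_adj[OF g(1)] g(1) that(2)] by simp
    also have "\<dots> = T i s"
      using gact_adj_mult_self[OF g(1) that(2)] .
    finally show ?thesis
      by simp
  qed
  then have "nahm_eq T (gact (\<lambda>s. adj (g s)) S)"
    by (simp add: nahm_eq_def)
  moreover have "x = Hact (adj (g 0), adj (g 1)) y"
    using g(1,3) gauge_unitary[of g 0] gauge_unitary[of g 1]
    by (simp add: Hact_mult Hact_mat1 unitary_def)
  ultimately show ?thesis
    using assms(2)[OF g(2)] gauge_adj[OF g(1)] by (auto simp: rel_by_def zw)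
qed

section \<open>Diagonal data\<close>

definition diag_nahm_sol :: "'k::finite nahm \<Rightarrow> bool" where
  "diag_nahm_sol T \<longleftrightarrow> nahm_sol T \<and> (\<forall>i\<le>3. \<forall>s\<in>{0..1}. diagonal (T i s))"

text \<open>For diagonal data all commutators in Nahm's equations vanish.\<close>

lemma diag_nahm_sol_const:
  assumes T: "diag_nahm_sol T" and a: "a \<in> {1,2,3}" and s: "s \<in> {0..1}"
  shows "T a s = T a 0"
proof -
  obtain j l where jl: "(a, j, l) \<in> {(1::nat, 2::nat, 3::nat), (2, 3, 1), (3, 1, 2)}"
    using a by auto
  then have "\<forall>t\<in>{0..1}. (T a has_vector_derivative
      (- comm (T 0 t) (T a t) - comm (T j t) (T l t))) (at t within {0..1})"
    using T unfolding diag_nahm_sol_def nahm_sol_def by blast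
  moreover have "- comm (T 0 t) (T a t) - comm (T j t) (T l t) = 0" if "t \<in> {0..1}" for t
    using T jl that by (auto simp: diag_nahm_sol_def comm_def diagonal_commute)
  ultimately have "\<forall>t\<in>{0..1}. (T a has_vector_derivative 0) (at t within {0..1})"
    by simp
  then obtain c where "\<And>t. t \<in> {0..1} \<Longrightarrow> T a t = c"
    using has_vector_derivative_zero_constant[of "{0..1::real}" "T a"] by blast
  then show ?thesis
    using s by simp
qed

lemma in_hatM0E:
  assumes "in_hatM0 (x, T)"
  obtains A B S where "x = (A, B, 0, 0)" "diagonal A" "diagonal B" "diag_nahm_sol S"
    "rel_by {(mat 1, mat 1)} (x, T) (x, S)"
  using assms unfolding in_hatM0_def diag_nahm_sol_def by blast

lemma rel_by_mat1_endpoints: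
  assumes "rel_by {(mat 1, mat 1)} (x, T) (y, S)" and "i \<le> 3" "i \<noteq> 0"
  shows "S i 0 = T i 0" "S i 1 = T i 1"
  using assms by (auto simp: rel_by_def nahm_eq_def gact_def)

lemma mu_hat_diagonal:
  assumes A: "diagonal A" and B: "diagonal B" and a: "a \<in> {1,2,3::nat}"
  shows "diagonal (mu_hat (A, B, 0, 0) a 0)"
    and "mu_hat (A, B, 0, 0) a 1 = - mu_hat (A, B, 0, 0) a 0"
    and "Re (mu_hat (A, B, 0, 0) a 0 $ m $ m) = 0"
proof -
  have muR: "muR (A, B, 0, 0) j $ i $ i' = (if i = i' then (\<i>/2) *
      (if j = 0 then A$i$i * cnj (A$i$i) - cnj (B$i$i) * B$i$i
       else B$i$i * cnj (B$i$i) - cnj (A$i$i) * A$i$i) else 0)" for j i i'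
    using A B by (auto simp: muR_def csmul_def outer_def diagonal_mult_left_entry
        diagonal_mult_right_entry diagonal_entry_eq_0)
  have muC: "muC (A, B, 0, 0) j $ i $ i' = (if i = i' then
      (if j = 0 then A$i$i * B$i$i else - (A$i$i * B$i$i)) else 0)" for j i i'
    using A B by (auto simp: muC_def outer_def diagonal_mult_left_entry diagonal_entry_eq_0
        mult.commute)
  have Re_cnj: "Re (x * y / (\<i> * 2)) + Re (cnj x * cnj y / (\<i> * 2)) = 0" for x y :: complex
    by (simp add: Re_divide field_simps flip: complex_cnj_mult)
  show "diagonal (mu_hat (A, B, 0, 0) a 0)"
    "mu_hat (A, B, 0, 0) a 1 = - mu_hat (A, B, 0, 0) a 0"
    "Re (mu_hat (A, B, 0, 0) a 0 $ m $ m) = 0"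
    using a by (auto simp: diagonal_def vec_eq_iff mu_hat_def csmul_def muR muC algebra_simps Re_cnj)
qed

lemma sigma_zero_imp_sigma0_zero: "sigma_zero z \<Longrightarrow> sigma0_zero z"
  unfolding sigma_zero_def sigma0_zero_def by (simp add: trace_def)

lemma sigma0_zero_imp_sigma_zero:
  assumes z: "in_hatM0 z" and zero: "sigma0_zero z"
  shows "sigma_zero z"
proof -
  obtain x T where xT: "z = (x, T)"
    by fastforce
  obtain A B S where x: "x = (A, B, 0, 0)" and A: "diagonal A" and B: "diagonal B"
    and S: "diag_nahm_sol S" and TS: "rel_by {(mat 1, mat 1)} (x, T) (x, S)"
    using z unfolding xT by (rule in_hatM0E)
  have "sigma z a 0 = 0 \<and> sigma z a 1 = 0" if a: "a \<in> {1,2,3}" for a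
  proof -
    define D where "D = sigma z a 0"
    have ends: "T a 0 = S a 0" "T a 1 = S a 0"
      using rel_by_mat1_endpoints[OF TS] diag_nahm_sol_const[OF S a, of 1] a by auto
    have Sa: "diagonal (S a 0)" "skew (S a 0)"
      using S a by (auto simp: diag_nahm_sol_def nahm_sol_def)
    have D: "D = mu_hat x a 0 + S a 0" and D1: "sigma z a 1 = - D"
      using mu_hat_diagonal(2)[OF A B a] ends by (simp_all add: D_def xT x sigma_def nu_def)
    have dD: "diagonal D"
      unfolding D x by (intro diagonal_add mu_hat_diagonal(1)[OF A B a] Sa(1))
    have ReD: "Re (D $ m $ m) = 0" for m
      using mu_hat_diagonal(3)[OF A B a] skew_diagonal_entry_Re[OF Sa(2)] by (simp add: D x)
    have "Re (trace (D ** D)) = 0"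
      using zero a dD diagonal_skewI[OF dD ReD] unfolding sigma0_zero_def D_def by blast
    then have "D = 0"
      using diagonal_imaginary_trace_square_eq_0[OF dD ReD] by blast
    then show ?thesis
      using D1 by (simp add: D_def)
  qed
  then show ?thesis
    unfolding sigma_zero_def by auto
qed

section \<open>Monomial gauge transformations\<close>

lemma diag_mat_diff: "diag_mat d - diag_mat e = diag_mat (\<lambda>a. d a - e a)"
  by (simp add: diag_mat_def vec_eq_iff)

lemma monomial_mat_has_vector_derivative:
  assumes "\<And>a. (E a has_vector_derivative E' a) (at s within S)"
  shows "((\<lambda>s. monomial_mat \<rho> (\<lambda>a. E a s)) has_vector_derivative monomial_mat \<rho> E') (at s within S)"
  unfolding has_vector_derivative_mat_iff monomial_mat_entry
proof (intro allI)
  show "((\<lambda>s. if j = \<rho> i then E i s else 0) has_vector_derivative (if j = \<rho> i then E' i else 0))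
      (at s within S)" for i j
    using assms by (cases "j = \<rho> i") simp_all
qed

lemma gauge_monomial_mat:
  assumes \<rho>: "\<rho> permutes UNIV" and f: "\<And>a. C1_on01 (f a)"
    and E: "\<And>a. \<forall>s\<in>{0..1}. (E a has_vector_derivative f a s * E a s) (at s within {0..1})
      \<and> E a s * cnj (E a s) = 1"
  shows "gauge (\<lambda>s. monomial_mat \<rho> (\<lambda>a. E a s))"
  unfolding gauge_def
proof (intro conjI ballI)
  have "C2_on01 (\<lambda>s. monomial_mat \<rho> (\<lambda>a. E a s) $ i $ j)" for i j
    using C2_on01_ode_solution[OF f] E C2_on01_const by (cases "j = \<rho> i") (auto simp: monomial_mat_entry)
  then show "C2_on01 (\<lambda>s. monomial_mat \<rho> (\<lambda>a. E a s))"
    by (rule C2_on01_from_entries)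
  show "unitary (monomial_mat \<rho> (\<lambda>a. E a s))" if "s \<in> {0..1}" for s
    using E that by (intro unitary_monomial_mat[OF \<rho>]) blast
qed

lemma gact_monomial_mat_diagonal:
  assumes \<rho>: "\<rho> permutes UNIV" and s: "s \<in> {0..1}" and T: "diagonal (T i s)"
    and E': "\<And>a. (E a has_vector_derivative f a * E a s) (at s within {0..1})"
    and unit: "\<And>a. E a s * cnj (E a s) = 1"
  shows "gact (\<lambda>s. monomial_mat \<rho> (\<lambda>a. E a s)) T i s =
    diag_mat (\<lambda>a. T i s $ \<rho> a $ \<rho> a - (if i = 0 then f a else 0))"
proof -
  have vd: "vector_derivative (\<lambda>s. monomial_mat \<rho> (\<lambda>a. E a s)) (at s within {0..1}) =
      monomial_mat \<rho> (\<lambda>a. f a * E a s)"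
    by (intro vector_derivative_within_01[OF s] monomial_mat_has_vector_derivative E')
  have unit': "E a s * x * cnj (E a s) = x" "x * E a s * cnj (E a s) = x" for a x
    using unit[of a] by (simp_all add: algebra_simps)
  have inj: "inj \<rho>"
    using permutes_inj[OF \<rho>] .
  show ?thesis
  proof (cases "i = 0")
    case True
    with T have "diagonal (T 0 s)"
      by simp
    with True inj show ?thesis
      by (simp add: gact_def vd monomial_mat_sandwich monomial_mat_mult_adj diag_mat_diff unit')
  qed (simp add: gact_def monomial_mat_sandwich[OF inj T] unit')
qed

lemma monomial_mat_endpoints_in_H0gens:
  assumes \<rho>: "\<rho> permutes UNIV" and unit: "\<And>a. m a * cnj (m a) = 1"
  shows "(monomial_mat \<rho> m, monomial_mat \<rho> (\<lambda>a. 1)) \<in> H0gens"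
proof -
  have "monomial_mat \<rho> m = diag_mat m ** monomial_mat \<rho> (\<lambda>a. 1)"
    by (simp add: diagonal_mult_monomial_mat[OF diagonal_diag_mat]) (simp add: diag_mat_def)
  moreover have "unitary (diag_mat m)"
    using unitary_monomial_mat[OF permutes_id unit] by (simp add: monomial_mat_id)
  ultimately show ?thesis
    unfolding H0gens_def using diagonal_diag_mat permmat_monomial_mat[OF \<rho>] by blast
qed

lemma rel_by_H0gens_monomial_gauge:
  fixes Td Sd :: "'k::finite nahm"
  assumes Td: "diag_nahm_sol Td" and Sd: "diag_nahm_sol Sd"
    and A: "diagonal A" and B: "diagonal B" and A': "diagonal A'" and B': "diagonal B'"
    and \<rho>: "\<rho> permutes UNIV"
    and E1: "\<And>a. E a 1 = 1"
    and E: "\<And>a. \<forall>s\<in>{0..1}. (E a has_vector_derivative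
      (Td 0 s $ \<rho> a $ \<rho> a - Sd 0 s $ a $ a) * E a s) (at s within {0..1}) \<and> E a s * cnj (E a s) = 1"
    and EA: "\<And>a. A' $ a $ a = E a 0 * A $ \<rho> a $ \<rho> a"
    and EB: "\<And>a. B' $ a $ a = cnj (E a 0) * B $ \<rho> a $ \<rho> a"
    and ET: "\<And>i a. i \<in> {1,2,3} \<Longrightarrow> Td i 0 $ \<rho> a $ \<rho> a = Sd i 0 $ a $ a"
  shows "rel_by H0gens ((A, B, 0, 0), Td) ((A', B', 0, 0), Sd)"
proof -
  define g where "g s = monomial_mat \<rho> (\<lambda>a. E a s)" for s
  have "C1_on01 (\<lambda>s. Td 0 s $ \<rho> a $ \<rho> a - Sd 0 s $ a $ a)" for a
    using Td Sd unfolding diag_nahm_sol_def nahm_sol_def by (intro C1_on01_diff C1_on01_entry) auto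
  then have g: "gauge g"
    unfolding g_def[abs_def] by (rule gauge_monomial_mat[OF \<rho> _ E])
  have "(g 0, g 1) \<in> H0gens"
    unfolding g_def E1 using monomial_mat_endpoints_in_H0gens[OF \<rho>] E by simp
  moreover have "(A', B', 0, 0) = Hact (g 0, g 1) (A, B, 0, 0)"
    using permutes_inj[OF \<rho>] A A' B B' EA EB E1
    by (simp add: g_def monomial_mat_sandwich eq_commute[of A'] eq_commute[of B']
        diag_mat_eq_diagonal_iff mult.commute)
  moreover have "gact g Td i s = Sd i s" if i: "i \<le> 3" and s: "s \<in> {0..1}" for i s
  proof -
    have diag: "diagonal (Td i s)" "diagonal (Sd i s)"
      using Td Sd i s by (auto simp: diag_nahm_sol_def)
    have "gact g Td i s = diag_mat (\<lambda>a. Td i s $ \<rho> a $ \<rho> a -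
        (if i = 0 then Td 0 s $ \<rho> a $ \<rho> a - Sd 0 s $ a $ a else 0))"
      unfolding g_def[abs_def] using E s
      by (intro gact_monomial_mat_diagonal[where T = Td and i = i, OF \<rho> s diag(1)]) auto
    also have "\<dots> = Sd i s"
    proof (cases "i = 0")
      case False
      then have "i \<in> {1,2,3}"
        using i by auto
      with ET show ?thesis
        using False diag(2) diag_nahm_sol_const[OF Td _ s] diag_nahm_sol_const[OF Sd _ s]
        by (simp add: diag_mat_eq_diagonal_iff)
    qed (use diag(2) in \<open>simp add: diag_mat_eq_diagonal_iff\<close>)
    finally show ?thesis .
  qed
  ultimately show ?thesis
    using g by (auto simp: rel_by_def nahm_eq_def)
qed

text \<open>A gauge transformation between diagonal Nahm data satisfies \<open>G' = G T\<^sub>0 - S\<^sub>0 G\<close>,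
  which for diagonal \<open>T\<^sub>0, S\<^sub>0\<close> decouples into scalar equations for the entries.\<close>

lemma gauge_between_diagonal_entry_ode:
  assumes G: "gauge G" and s: "s \<in> {0..1}"
    and T: "diagonal (T 0 s)" and S: "diagonal (S 0 s)" and GT: "gact G T 0 s = S 0 s"
  shows "((\<lambda>s. G s $ a $ b) has_vector_derivative (T 0 s $ b $ b - S 0 s $ a $ a) * G s $ a $ b)
    (at s within {0..1})"
proof -
  define G' where "G' = vector_derivative G (at s within {0..1})"
  have G': "G' = G s ** T 0 s - S 0 s ** G s"
    using GT gauge_unitary[OF G s] by (intro unitary_conj_diff_eq_imp) (simp_all add: gact_def G'_def)
  have "G' $ a $ b = (T 0 s $ b $ b - S 0 s $ a $ a) * G s $ a $ b"
    unfolding G' using T S by (simp add: diagonal_mult_left_entry diagonal_mult_right_entry algebra_simps)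
  moreover have "((\<lambda>s. G s $ a $ b) has_vector_derivative G' $ a $ b) (at s within {0..1})"
    using gauge_has_vector_derivative[OF G s] by (simp add: G'_def has_vector_derivative_mat_iff)
  ultimately show ?thesis
    by simp
qed

lemma rel_by_Hgrp_diagonal_imp_rel_by_H0gens:
  fixes Td Sd :: "'k::finite nahm"
  assumes Td: "diag_nahm_sol Td" and Sd: "diag_nahm_sol Sd"
    and A: "diagonal A" and B: "diagonal B" and A': "diagonal A'" and B': "diagonal B'"
    and rel: "rel_by Hgrp ((A, B, 0, 0), Td) ((A', B', 0, 0), Sd)"
  shows "rel_by H0gens ((A, B, 0, 0), Td) ((A', B', 0, 0), Sd)"
proof -
  obtain G where G: "gauge G" and GA: "A' = G 0 ** A ** adj (G 1)"
    and GB: "B' = G 1 ** B ** adj (G 0)" and GT: "\<And>i s. i \<le> 3 \<Longrightarrow> s \<in> {0..1} \<Longrightarrow> gact G Td i s = Sd i s"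
    using rel by (auto simp: rel_by_def nahm_eq_def)
  have U0: "unitary (G 0)" and U1: "unitary (G 1)"
    using gauge_unitary[OF G] by auto
  obtain \<rho> where \<rho>: "\<rho> permutes UNIV" and nz: "\<And>a. G 0 $ a $ \<rho> a \<noteq> 0"
    using det_nonzero_ex_permutation[OF det_unitary_nonzero[OF U0]] by blast
  define f where "f a s = Td 0 s $ \<rho> a $ \<rho> a - Sd 0 s $ a $ a" for a s
  have f_cont: "continuous_on {0..1} (f a)" for a
    using Td Sd unfolding f_def[abs_def] diag_nahm_sol_def nahm_sol_def
    by (intro C1_on01_imp_continuous_on C1_on01_diff C1_on01_entry) auto
  have f_Re: "\<forall>s\<in>{0..1}. Re (f a s) = 0" for a
    using Td Sd by (auto simp: f_def diag_nahm_sol_def nahm_sol_def skew_diagonal_entry_Re)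
  obtain E where E1: "\<And>a. E a 1 = 1" and E: "\<And>a. \<forall>s\<in>{0..1}.
      (E a has_vector_derivative f a s * E a s) (at s within {0..1}) \<and> E a s * cnj (E a s) = 1"
    using imaginary_ode_unimodular_solution[OF f_cont f_Re] by metis
  have G_ode: "\<forall>s\<in>{0..1}. ((\<lambda>s. G s $ a $ \<rho> a) has_vector_derivative f a s * G s $ a $ \<rho> a)
      (at s within {0..1})" for a
    using Td Sd GT unfolding f_def diag_nahm_sol_def
    by (intro ballI gauge_between_diagonal_entry_ode[OF G]) auto
  have G1: "G 1 $ a $ \<rho> a = G 0 $ a $ \<rho> a * cnj (E a 0)" for a
    using imaginary_ode_mult_cnj_const[of "{0..1}" "f a" "\<lambda>s. G s $ a $ \<rho> a" "E a" 1 0]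
      f_Re G_ode E E1 by simp
  have EA: "A' $ a $ a = E a 0 * A $ \<rho> a $ \<rho> a" for a
  proof -
    have "A' $ a $ a * G 1 $ a $ \<rho> a = G 0 $ a $ \<rho> a * A $ \<rho> a $ \<rho> a"
      using GA U1 by (intro diagonal_intertwine_entry[OF A A']) (simp add: unitary_adj_mult_cancel)
    then have "A' $ a $ a * cnj (E a 0) = A $ \<rho> a $ \<rho> a"
      using nz[of a] by (simp add: G1 algebra_simps)
    moreover have "E a 0 * cnj (E a 0) = 1"
      using E[of a] by simp
    ultimately show ?thesis
      by (metis mult.left_commute mult_1_right)
  qed
  have EB: "B' $ a $ a = cnj (E a 0) * B $ \<rho> a $ \<rho> a" for a
  proof -
    have "B' $ a $ a * G 0 $ a $ \<rho> a = G 1 $ a $ \<rho> a * B $ \<rho> a $ \<rho> a"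
      using GB U0 by (intro diagonal_intertwine_entry[OF B B']) (simp add: unitary_adj_mult_cancel)
    then show ?thesis
      using nz[of a] by (simp add: G1 algebra_simps)
  qed
  have ET: "Td i 0 $ \<rho> a $ \<rho> a = Sd i 0 $ a $ a" if i: "i \<in> {1,2,3}" for i a
  proof -
    have diag: "diagonal (Td i 0)" "diagonal (Sd i 0)"
      using Td Sd i by (auto simp: diag_nahm_sol_def)
    have "Sd i 0 ** G 0 = G 0 ** Td i 0"
      using GT[of i 0] i U0 by (intro unitary_conj_eq_imp_commute[symmetric]) (auto simp: gact_def)
    from diagonal_intertwine_entry[OF diag(1,2) this, of a "\<rho> a"] show ?thesis
      using nz[of a] by (simp add: mult.commute)
  qed
  show ?thesis
    by (rule rel_by_H0gens_monomial_gauge[OF Td Sd A B A' B' \<rho> E1 E[unfolded f_def] EA EB ET])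
qed

lemma H0gens_subset_H0grp: "H0gens \<subseteq> H0grp"
  unfolding H0grp_def by blast

lemma rel_by_Hgrp_imp_rel_by_H0grp:
  assumes z: "in_hatM0 z" and w: "in_hatM0 w" and rel: "rel_by Hgrp z w"
  shows "rel_by H0grp z w"
proof -
  obtain x T y S where zw: "z = (x, T)" "w = (y, S)"
    by (metis prod.exhaust)
  obtain A B Td where x: "x = (A, B, 0, 0)" and A: "diagonal A" and B: "diagonal B"
    and Td: "diag_nahm_sol Td" and TTd: "rel_by {(mat 1, mat 1)} (x, T) (x, Td)"
    using z unfolding zw by (rule in_hatM0E)
  obtain A' B' Sd where y: "y = (A', B', 0, 0)" and A': "diagonal A'" and B': "diagonal B'"
    and Sd: "diag_nahm_sol Sd" and SSd: "rel_by {(mat 1, mat 1)} (y, S) (y, Sd)"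
    using w unfolding zw by (rule in_hatM0E)
  have TdT: "rel_by {(mat 1, mat 1)} (x, Td) (x, T)" and SdS: "rel_by {(mat 1, mat 1)} (y, Sd) (y, S)"
    by (auto intro: rel_by_sym TTd SSd)
  have "rel_by Hgrp (x, Td) (y, S)"
    using rel_by_trans[where M = Hgrp, OF TdT rel[unfolded zw]] by simp
  then have "rel_by Hgrp (x, Td) (y, Sd)"
    using rel_by_trans[where M = Hgrp, OF _ SSd] by simp
  then have H0: "rel_by H0gens (x, Td) (y, Sd)"
    unfolding x y by (rule rel_by_Hgrp_diagonal_imp_rel_by_H0gens[OF Td Sd A B A' B'])
  have "rel_by H0grp (x, T) (y, Sd)"
    using rel_by_trans[where M = H0grp, OF TTd H0] H0gens_subset_H0grp by auto
  then show ?thesis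
    unfolding zw using rel_by_trans[where M = H0grp, OF _ SdS] by simp
qed

theorem lemma5p2:
  fixes ktype :: "'k::finite itself"
  shows "(\<forall>z :: 'k Mpt \<times> 'k nahm. in_hatM0 z \<longrightarrow> (sigma0_zero z \<longleftrightarrow> sigma_zero z)) \<and>
         (\<forall>z w :: 'k Mpt \<times> 'k nahm.
            in_hatM0 z \<and> sigma0_zero z \<and> in_hatM0 w \<and> sigma0_zero w \<and> rel_by Hgrp z w
            \<longrightarrow> rel_by H0grp z w)"
  using sigma0_zero_imp_sigma_zero sigma_zero_imp_sigma0_zero rel_by_Hgrp_imp_rel_by_H0grp by blast

end
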